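(* Let $n,m\ge 2$. Suppose there exists a total $2$-dominating set $S$ of $K_n\Box K_m$ of minimum cardinality (i.e. $|S|=\gamma_{2t}(K_n\Box K_m)$) such that $S\cap(\{v\}\times V(K_m))\neq\emptyset$ for every $v\in V(K_n)$ and $S\cap(V(K_n)\times\{w\})\neq\emptyset$ for every $w\in V(K_m)$. Then \[ \gamma_{2t}(K_{n+4}\Box K_{m+4})=\gamma_{2t}(K_n\Box K_m)+6. \]
   Context: For a graph $G=(V,E)$, a set $S\subseteq V$ is a total $2$-dominating set if every vertex of $V$ (including those in $S$) is adjacent to at least $2$ vertices of $S$; $\gamma_{2t}(G)$ is the minimum cardinality of such a set. $G\Box H$ denotes the Cartesian product: vertex set $V(G)\times V(H)$, with $(u_1,v_1)\sim(u_2,v_2)$ iff either $u_1=u_2$ and $v_1\sim v_2$, or $v_1=v_2$ and $u_1\sim u_2$. $K_n$ is the complete graph on $n$ vertices. *)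

theory Defs
  imports Main
begin

definition complete_graph_verts :: "nat \<Rightarrow> nat set" where
  "complete_graph_verts n = {0..<n}"

definition complete_graph_adj :: "nat \<Rightarrow> nat \<Rightarrow> bool" where
  "complete_graph_adj u v \<longleftrightarrow> u \<noteq> v"

definition cart_prod_adj ::
  "('a \<Rightarrow> 'a \<Rightarrow> bool) \<Rightarrow> ('b \<Rightarrow> 'b \<Rightarrow> bool) \<Rightarrow> 'a \<times> 'b \<Rightarrow> 'a \<times> 'b \<Rightarrow> bool" where
  "cart_prod_adj EG EH x y \<longleftrightarrow>
     (fst x = fst y \<and> EH (snd x) (snd y)) \<or> (snd x = snd y \<and> EG (fst x) (fst y))"

definition total_k_dominating :: "'a set \<Rightarrow> ('a \<Rightarrow> 'a \<Rightarrow> bool) \<Rightarrow> nat \<Rightarrow> 'a set \<Rightarrow> bool" where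
  "total_k_dominating V E k S \<longleftrightarrow> S \<subseteq> V \<and> (\<forall>v\<in>V. card {u\<in>S. E v u} \<ge> k)"

definition gamma_2t :: "'a set \<Rightarrow> ('a \<Rightarrow> 'a \<Rightarrow> bool) \<Rightarrow> nat" where
  "gamma_2t V E = (LEAST c. \<exists>S. total_k_dominating V E 2 S \<and> card S = c)"

definition rook_verts :: "nat \<Rightarrow> nat \<Rightarrow> (nat \<times> nat) set" where
  "rook_verts n m = complete_graph_verts n \<times> complete_graph_verts m"

definition rook_adj :: "nat \<times> nat \<Rightarrow> nat \<times> nat \<Rightarrow> bool" where
  "rook_adj = cart_prod_adj complete_graph_adj complete_graph_adj"

end

theory Submission
  imports Defs Complex_Main
begin

text \<open>
  Call S total 2-dominating on the n \<times> m rook board if every cell sees at least two cells of S in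
  its row and column, and write r(i), c(j) for the number of cells of S in row i and column j.

  Lower bound: let S be total 2-dominating on the (n+4) \<times> (m+4) board. If some line misses S,
  every crossing line carries two cells of S, so |S| \<ge> 2(m+4) resp. 2(n+4). Otherwise give the
  cell (i, j) of S the weight 1/r(i) + 1/c(j). The weights add up to (n+4) + (m+4), and each is at
  most 4/3 because r(i) + c(j) \<ge> 4; equality throughout forces every cell to have
  (r, c) \<in> {(1,3), (3,1)}, and counting the two kinds gives 3(n+4) \<equiv> m+4 (mod 8). On the
  other hand every k with 4k \<ge> 3(n+m), satisfying 3n \<equiv> m (mod 8) in case of equality,
  bounds gamma_2t on the n \<times> m board from above: take two full rows or columns, a cross on the
  3 \<times> 3 board, or x row-triples and y column-triples on disjoint lines with x + y \<ge> n + m - k.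

  Upper bound: if a minimum S meets every row and column, add the six cells of the 3-plus-3
  star configuration in a new diagonal 4 \<times> 4 block; a cell of a mixed block then sees one
  cell of S along its old line and one of the block along its new line.
\<close>

definition row :: "('a \<times> 'b) set \<Rightarrow> 'a \<Rightarrow> 'b set" where
  "row S i = {j. (i, j) \<in> S}"

definition col :: "('a \<times> 'b) set \<Rightarrow> 'b \<Rightarrow> 'a set" where
  "col S j = {i. (i, j) \<in> S}"

definition meets_all_lines :: "nat \<Rightarrow> nat \<Rightarrow> (nat \<times> nat) set \<Rightarrow> bool" where
  "meets_all_lines n m S \<longleftrightarrow> (\<forall>i<n. row S i \<noteq> {}) \<and> (\<forall>j<m. col S j \<noteq> {})"

lemma row_transpose [simp]: "row (prod.swap ` S) = col S"
  by (simp add: row_def col_def fun_eq_iff pair_in_swap_image)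

lemma col_transpose [simp]: "col (prod.swap ` S) = row S"
  by (simp add: row_def col_def fun_eq_iff pair_in_swap_image)

lemma finite_row: "finite S \<Longrightarrow> finite (row S i)"
  by (rule finite_subset[of _ "snd ` S"]) (force simp: row_def)+

lemma finite_col: "finite S \<Longrightarrow> finite (col S j)"
  by (rule finite_subset[of _ "fst ` S"]) (force simp: col_def)+

lemma rook_verts_eq: "rook_verts n m = {..<n} \<times> {..<m}"
  by (auto simp: rook_verts_def complete_graph_verts_def)

lemma finite_rook_subset: "S \<subseteq> rook_verts n m \<Longrightarrow> finite S"
  by (rule finite_subset) (auto simp: rook_verts_eq)

lemma rook_adj_iff: "rook_adj (i, j) (a, b) \<longleftrightarrow> (a = i \<and> b \<noteq> j) \<or> (b = j \<and> a \<noteq> i)"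
  by (auto simp: rook_adj_def cart_prod_adj_def complete_graph_adj_def)

lemma card_rook_neighbours:
  assumes "finite S"
  shows "card {u\<in>S. rook_adj (i, j) u} = card (row S i - {j}) + card (col S j - {i})"
proof -
  have "{u\<in>S. rook_adj (i, j) u} = Pair i ` (row S i - {j}) \<union> (\<lambda>a. (a, j)) ` (col S j - {i})"
    by (auto simp: rook_adj_iff row_def col_def)
  moreover have "Pair i ` (row S i - {j}) \<inter> (\<lambda>a. (a, j)) ` (col S j - {i}) = {}"
    by auto
  ultimately show ?thesis
    using assms by (simp add: card_Un_disjoint finite_row finite_col card_image inj_on_def)
qed

lemma rook_total_2_dominating_iff:
  "total_k_dominating (rook_verts n m) rook_adj 2 S \<longleftrightarrow>
     S \<subseteq> rook_verts n m \<and> (\<forall>i<n. \<forall>j<m. 2 \<le> card (row S i - {j}) + card (col S j - {i}))"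
proof -
  have "(\<forall>v\<in>rook_verts n m. P v) \<longleftrightarrow> (\<forall>i<n. \<forall>j<m. P (i, j))" for P
    by (auto simp: rook_verts_eq)
  then show ?thesis
    unfolding total_k_dominating_def
    by (auto simp: card_rook_neighbours finite_rook_subset)
qed

lemma rook_total_2_dominating_transpose:
  assumes "total_k_dominating (rook_verts n m) rook_adj 2 S"
  shows "total_k_dominating (rook_verts m n) rook_adj 2 (prod.swap ` S)"
  using assms unfolding rook_total_2_dominating_iff by (auto simp: rook_verts_eq add.commute)

lemma gamma_2t_le: "total_k_dominating V E 2 S \<Longrightarrow> gamma_2t V E \<le> card S"
  unfolding gamma_2t_def by (rule Least_le) blast

lemma gamma_2t_attained:
  "total_k_dominating V E 2 S \<Longrightarrow> \<exists>S'. total_k_dominating V E 2 S' \<and> card S' = gamma_2t V E"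
  unfolding gamma_2t_def by (rule LeastI_ex) blast

lemma rook_total_2_dominatingI:
  assumes sub: "S \<subseteq> rook_verts n m" and lines: "meets_all_lines n m S"
    and rich: "\<And>i j. (i, j) \<in> S \<Longrightarrow> 3 \<le> card (row S i) \<or> 3 \<le> card (col S j)"
  shows "total_k_dominating (rook_verts n m) rook_adj 2 S"
  unfolding rook_total_2_dominating_iff
proof (intro conjI sub allI impI)
  fix i j assume ij: "i < n" "j < m"
  have fin: "finite (row S i)" "finite (col S j)"
    using finite_rook_subset[OF sub] by (simp_all add: finite_row finite_col)
  show "2 \<le> card (row S i - {j}) + card (col S j - {i})"
  proof (cases "(i, j) \<in> S")
    case True
    then have "j \<in> row S i" "i \<in> col S j" by (simp_all add: row_def col_def)
    with fin rich[OF True] show ?thesis by (auto simp: card_gt_0_iff)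
  next
    case False
    then have "row S i - {j} = row S i" "col S j - {i} = col S j" by (auto simp: row_def col_def)
    moreover have "0 < card (row S i)" "0 < card (col S j)"
      using fin lines ij by (auto simp: meets_all_lines_def card_gt_0_iff)
    ultimately show ?thesis by simp
  qed
qed

lemma rook_two_rows_total_2_dominating:
  assumes "2 \<le> n" "2 \<le> m"
  shows "total_k_dominating (rook_verts n m) rook_adj 2 ({0, 1} \<times> {..<m})"
  unfolding rook_total_2_dominating_iff
proof (intro conjI allI impI)
  show "{0, 1} \<times> {..<m} \<subseteq> rook_verts n m" using assms by (auto simp: rook_verts_eq)
  fix i j assume "i < n" "j < m"
  moreover have "row ({0, 1} \<times> {..<m}) i = (if i \<le> 1 then {..<m} else {})"
    and "col ({0, 1} \<times> {..<m}) j = (if j < m then {0, 1} else {})"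
    by (auto simp: row_def col_def)
  ultimately show "2 \<le> card (row ({0, 1} \<times> {..<m}) i - {j}) + card (col ({0, 1} \<times> {..<m}) j - {i})"
    using assms by (cases "i \<le> 1") (auto simp: le_Suc_eq insert_Diff_if)
qed

lemma gamma_2t_rook_le_two_rows:
  assumes "2 \<le> n" "2 \<le> m"
  shows "gamma_2t (rook_verts n m) rook_adj \<le> 2 * m"
proof -
  have "card ({0, 1 :: nat} \<times> {..<m}) = 2 * m" by (simp add: card_cartesian_product)
  then show ?thesis using gamma_2t_le[OF rook_two_rows_total_2_dominating[OF assms]] by simp
qed

lemma gamma_2t_rook_le_two_cols:
  assumes "2 \<le> n" "2 \<le> m"
  shows "gamma_2t (rook_verts n m) rook_adj \<le> 2 * n"
proof -
  let ?S = "{0, 1} \<times> {..<n} :: (nat \<times> nat) set"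
  have "total_k_dominating (rook_verts n m) rook_adj 2 (prod.swap ` ?S)"
    using rook_total_2_dominating_transpose[OF rook_two_rows_total_2_dominating] assms by blast
  then show ?thesis
    using gamma_2t_le card_image[of prod.swap ?S] by (fastforce simp: card_cartesian_product)
qed

lemma gamma_2t_rook_le_cross:
  assumes "3 \<le> n" "3 \<le> m"
  shows "gamma_2t (rook_verts n m) rook_adj \<le> n + m - 1"
proof -
  let ?S = "{0} \<times> {..<m} \<union> {..<n} \<times> {0}"
  have row0: "row ?S 0 = {..<m}" and col0: "col ?S 0 = {..<n}"
    using assms by (auto simp: row_def col_def)
  have "total_k_dominating (rook_verts n m) rook_adj 2 ?S"
  proof (rule rook_total_2_dominatingI)
    show "?S \<subseteq> rook_verts n m" using assms by (auto simp: rook_verts_eq)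
    show "meets_all_lines n m ?S"
      using assms by (auto simp: meets_all_lines_def row_def col_def)
    show "3 \<le> card (row ?S i) \<or> 3 \<le> card (col ?S j)" if "(i, j) \<in> ?S" for i j
      using that assms row0 col0 by auto
  qed
  moreover have "card ?S = n + m - 1"
  proof -
    have "card ?S + card ({0} \<times> {..<m} \<inter> {..<n} \<times> {0}) = m + n"
      using card_Un_Int[of "{0} \<times> {..<m}" "{..<n} \<times> {0}"] by (simp add: card_cartesian_product)
    moreover have "{0} \<times> {..<m} \<inter> {..<n} \<times> {0} = {(0, 0)}" using assms by auto
    ultimately show ?thesis by simp
  qed
  ultimately show ?thesis using gamma_2t_le by fastforce
qed

section \<open>Double counting\<close>

lemma sum_over_rows:
  fixes f :: "nat \<Rightarrow> 'c::comm_semiring_1"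
  assumes "S \<subseteq> rook_verts n m"
  shows "(\<Sum>p\<in>S. f (fst p)) = (\<Sum>i<n. of_nat (card (row S i)) * f i)"
proof -
  have "S = Sigma {..<n} (row S)" using assms by (auto simp: row_def rook_verts_eq)
  then have "(\<Sum>p\<in>S. f (fst p)) = (\<Sum>p\<in>Sigma {..<n} (row S). f (fst p))" by simp
  also have "\<dots> = (\<Sum>i<n. \<Sum>j\<in>row S i. f i)"
    using finite_row[OF finite_rook_subset[OF assms]] by (subst sum.Sigma) (auto simp: split_def)
  finally show ?thesis by simp
qed

lemma sum_over_cols:
  fixes f :: "nat \<Rightarrow> 'c::comm_semiring_1"
  assumes "S \<subseteq> rook_verts n m"
  shows "(\<Sum>p\<in>S. f (snd p)) = (\<Sum>j<m. of_nat (card (col S j)) * f j)"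
proof -
  have "prod.swap ` S \<subseteq> rook_verts m n" using assms by (auto simp: rook_verts_eq)
  then have "(\<Sum>q\<in>prod.swap ` S. f (fst q)) = (\<Sum>j<m. of_nat (card (col S j)) * f j)"
    by (simp add: sum_over_rows)
  then show ?thesis by (simp add: sum.reindex comp_def)
qed

lemma rook_total_2_dominating_card_ge_of_empty_row:
  assumes tkd: "total_k_dominating (rook_verts n m) rook_adj 2 S"
    and empty: "i < n" "row S i = {}"
  shows "2 * m \<le> card S"
proof -
  have sub: "S \<subseteq> rook_verts n m"
    and two: "\<And>j. j < m \<Longrightarrow> 2 \<le> card (col S j - {i})"
    using tkd empty unfolding rook_total_2_dominating_iff by force+
  have "2 \<le> card (col S j)" if "j < m" for j
    using two[OF that] card_mono[OF finite_col[OF finite_rook_subset[OF sub]], of "col S j - {i}" j]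
    by auto
  then have "(\<Sum>j<m. 2) \<le> (\<Sum>j<m. card (col S j))" by (rule sum_mono) simp
  also have "\<dots> = card S" using sum_over_cols[OF sub, of "\<lambda>_. 1::nat"] by simp
  finally show ?thesis by simp
qed

lemma rook_total_2_dominating_card_ge_of_empty_col:
  assumes "total_k_dominating (rook_verts n m) rook_adj 2 S" "j < m" "col S j = {}"
  shows "2 * n \<le> card S"
  using rook_total_2_dominating_card_ge_of_empty_row[OF rook_total_2_dominating_transpose[OF assms(1)]] assms(2,3)
  by (simp add: card_image)

lemma rook_total_2_dominating_line_cards:
  assumes tkd: "total_k_dominating (rook_verts n m) rook_adj 2 S" and ij: "(i, j) \<in> S"
  shows "1 \<le> card (row S i)" "1 \<le> card (col S j)" "4 \<le> card (row S i) + card (col S j)"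
proof -
  have sub: "S \<subseteq> rook_verts n m" using tkd by (simp add: rook_total_2_dominating_iff)
  then have "i < n" "j < m" using ij by (auto simp: rook_verts_eq)
  then have two: "2 \<le> card (row S i - {j}) + card (col S j - {i})"
    using tkd by (simp add: rook_total_2_dominating_iff)
  have "j \<in> row S i" "i \<in> col S j" using ij by (simp_all add: row_def col_def)
  moreover have "finite (row S i)" "finite (col S j)"
    using finite_rook_subset[OF sub] by (simp_all add: finite_row finite_col)
  ultimately show "1 \<le> card (row S i)" "1 \<le> card (col S j)"
    by (auto simp: Suc_le_eq card_gt_0_iff)
  with two show "4 \<le> card (row S i) + card (col S j)"
    using \<open>j \<in> row S i\<close> \<open>i \<in> col S j\<close> by simp
qed

lemma inverse_add_inverse_le_four_thirds:
  fixes r c :: nat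
  assumes "1 \<le> r" "1 \<le> c" "4 \<le> r + c"
  shows "1 / real r + 1 / real c \<le> 4 / 3"
    and "1 / real r + 1 / real c = 4 / 3 \<Longrightarrow> (r = 1 \<and> c = 3) \<or> (r = 3 \<and> c = 1)"
proof -
  have key: "3 * (r + c) \<le> 4 * (r * c) \<and>
      (3 * (r + c) = 4 * (r * c) \<longrightarrow> (r = 1 \<and> c = 3) \<or> (r = 3 \<and> c = 1))"
  proof (cases "r = 1 \<or> c = 1")
    case True
    then show ?thesis using assms by auto
  next
    case False
    then have "2 * c \<le> r * c" "r * 2 \<le> r * c"
      using assms by (simp_all add: mult_le_mono1 mult_le_mono2)
    then have "3 * r + 3 * c < 4 * (r * c)" using assms by linarith
    then show ?thesis by simp
  qed
  have pos: "0 < real r" "0 < real c" using assms by auto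
  have "real (3 * (r + c)) \<le> real (4 * (r * c))" using key by (simp only: of_nat_le_iff)
  with pos show "1 / real r + 1 / real c \<le> 4 / 3" by (simp add: field_simps)
  assume "1 / real r + 1 / real c = 4 / 3"
  with pos have "real (3 * (r + c)) = real (4 * (r * c))" by (simp add: field_simps)
  then have "3 * (r + c) = 4 * (r * c)" by (simp only: of_nat_eq_iff)
  with key show "(r = 1 \<and> c = 3) \<or> (r = 3 \<and> c = 1)" by simp
qed

definition cell_weight :: "(nat \<times> nat) set \<Rightarrow> nat \<times> nat \<Rightarrow> real" where
  "cell_weight S p = 1 / real (card (row S (fst p))) + 1 / real (card (col S (snd p)))"

lemma sum_inverse_row_card:
  assumes sub: "S \<subseteq> rook_verts n m" and rows: "\<forall>i<n. row S i \<noteq> {}"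
  shows "(\<Sum>p\<in>S. 1 / real (card (row S (fst p)))) = real n"
proof -
  have "(\<Sum>p\<in>S. 1 / real (card (row S (fst p)))) =
      (\<Sum>i<n. real (card (row S i)) * (1 / real (card (row S i))))"
    by (rule sum_over_rows[OF sub])
  also have "\<dots> = real n"
    using rows finite_row[OF finite_rook_subset[OF sub]] by (simp add: card_gt_0_iff)
  finally show ?thesis .
qed

lemma sum_inverse_col_card:
  assumes sub: "S \<subseteq> rook_verts n m" and cols: "\<forall>j<m. col S j \<noteq> {}"
  shows "(\<Sum>p\<in>S. 1 / real (card (col S (snd p)))) = real m"
proof -
  have "prod.swap ` S \<subseteq> rook_verts m n" using sub by (auto simp: rook_verts_eq)
  then have "(\<Sum>q\<in>prod.swap ` S. 1 / real (card (col S (fst q)))) = real m"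
    using sum_inverse_row_card[of "prod.swap ` S" m n] cols by simp
  then show ?thesis by (simp add: sum.reindex comp_def)
qed

lemma sum_cell_weight:
  assumes "S \<subseteq> rook_verts n m" "meets_all_lines n m S"
  shows "(\<Sum>p\<in>S. cell_weight S p) = real n + real m"
  using assms sum_inverse_row_card sum_inverse_col_card
  by (simp add: cell_weight_def sum.distrib meets_all_lines_def)

lemma cell_weight_le_four_thirds:
  assumes "total_k_dominating (rook_verts n m) rook_adj 2 S" "p \<in> S"
  shows "cell_weight S p \<le> 4 / 3"
  unfolding cell_weight_def
  using rook_total_2_dominating_line_cards[of n m S "fst p" "snd p"] assms
  by (intro inverse_add_inverse_le_four_thirds(1)) auto

lemma rook_total_2_dominating_card_lower_bound:
  assumes tkd: "total_k_dominating (rook_verts n m) rook_adj 2 S"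
    and lines: "meets_all_lines n m S"
  shows "3 * (n + m) \<le> 4 * card S"
proof -
  have sub: "S \<subseteq> rook_verts n m" using tkd by (simp add: rook_total_2_dominating_iff)
  have "real n + real m = (\<Sum>p\<in>S. cell_weight S p)"
    using sum_cell_weight[OF sub lines] by simp
  also have "\<dots> \<le> (\<Sum>p\<in>S. 4 / 3)"
    by (rule sum_mono) (rule cell_weight_le_four_thirds[OF tkd])
  finally have "real (3 * (n + m)) \<le> real (4 * card S)" by simp
  then show ?thesis by (simp only: of_nat_le_iff)
qed

lemma rook_total_2_dominating_tight_line_cards:
  assumes tkd: "total_k_dominating (rook_verts n m) rook_adj 2 S"
    and lines: "meets_all_lines n m S" and eq: "4 * card S = 3 * (n + m)" and p: "p \<in> S"
  shows "card (row S (fst p)) = 1 \<and> card (col S (snd p)) = 3 \<or>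
         card (row S (fst p)) = 3 \<and> card (col S (snd p)) = 1"
proof -
  have sub: "S \<subseteq> rook_verts n m" using tkd by (simp add: rook_total_2_dominating_iff)
  have "4 * real (card S) = 3 * (real n + real m)" using arg_cong[OF eq, of real] by simp
  then have "(\<Sum>q\<in>S. 4 / 3 - cell_weight S q) = 0"
    using sum_cell_weight[OF sub lines] by (simp add: sum_subtractf)
  then have "cell_weight S p = 4 / 3"
    using sum_nonneg_eq_0_iff[OF finite_rook_subset[OF sub], of "\<lambda>q. 4 / 3 - cell_weight S q"]
      cell_weight_le_four_thirds[OF tkd] p by auto
  then show ?thesis
    unfolding cell_weight_def
    using rook_total_2_dominating_line_cards[of n m S "fst p" "snd p"] tkd p
    by (intro inverse_add_inverse_le_four_thirds(2)) auto
qed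

lemma rook_total_2_dominating_tight_mod_8:
  assumes tkd: "total_k_dominating (rook_verts n m) rook_adj 2 S"
    and lines: "meets_all_lines n m S" and eq: "4 * card S = 3 * (n + m)"
  shows "(3 * n) mod 8 = m mod 8"
proof -
  have sub: "S \<subseteq> rook_verts n m" using tkd by (simp add: rook_total_2_dominating_iff)
  define U where "U = {p \<in> S. card (row S (fst p)) = 1}"
  have split: "(\<Sum>p\<in>S. f p) = (\<Sum>p\<in>U. f p) + (\<Sum>p\<in>S - U. f p)" for f :: "_ \<Rightarrow> real"
    using sum.subset_diff[of U S f] finite_rook_subset[OF sub] by (simp add: U_def)
  have U: "card (row S (fst p)) = 1" "card (col S (snd p)) = 3" if "p \<in> U" for p
    using rook_total_2_dominating_tight_line_cards[OF tkd lines eq, of p] that by (auto simp: U_def)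
  have V: "card (row S (fst p)) = 3" "card (col S (snd p)) = 1" if "p \<in> S - U" for p
    using rook_total_2_dominating_tight_line_cards[OF tkd lines eq, of p] that by (auto simp: U_def)
  have "real n = (\<Sum>p\<in>S. 1 / real (card (row S (fst p))))"
    using sum_inverse_row_card[OF sub] lines by (simp add: meets_all_lines_def)
  also have "\<dots> = real (card U) + real (card (S - U)) / 3"
    unfolding split by (simp add: U V)
  finally have rows: "3 * n = 3 * card U + card (S - U)" by linarith
  have "real m = (\<Sum>p\<in>S. 1 / real (card (col S (snd p))))"
    using sum_inverse_col_card[OF sub] lines by (simp add: meets_all_lines_def)
  also have "\<dots> = real (card U) / 3 + real (card (S - U))"
    unfolding split by (simp add: U V)
  finally have cols: "3 * m = card U + 3 * card (S - U)" by linarith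
  \<comment> \<open>three times 9n = 3m + 8 |U|\<close>
  have "3 * n + 8 * (3 * n) = m + 8 * (m + 3 * card U)" using rows cols by arith
  then have "(3 * n + 8 * (3 * n)) mod 8 = (m + 8 * (m + 3 * card U)) mod 8" by (rule arg_cong)
  then show ?thesis by (simp only: mod_mult_self2)
qed

section \<open>Star configurations\<close>

text \<open>
  Row k < x carries the triple {3k, 3k+1, 3k+2}, column 3x + l (l < y) the triple
  {x+3l, x+3l+1, x+3l+2}; the remaining rows are attached to column 3x and the remaining columns
  to row 0, so every cell lies on a line with three cells.
\<close>
definition star_config :: "nat \<Rightarrow> nat \<Rightarrow> nat \<Rightarrow> nat \<Rightarrow> (nat \<times> nat) set" where
  "star_config n m x y =
     (\<lambda>j. (j div 3, j)) ` {..<3 * x} \<union> (\<lambda>i. (i, 3 * x + (i - x) div 3)) ` {x..<x + 3 * y} \<union>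
     (\<lambda>i. (i, 3 * x)) ` {x + 3 * y..<n} \<union> (\<lambda>j. (0, j)) ` {3 * x + y..<m}"

lemma finite_star_config: "finite (star_config n m x y)"
  by (simp add: star_config_def)

lemma star_config_row_cell:
  assumes "k < x" "s < 3"
  shows "(k, 3 * k + s) \<in> star_config n m x y"
proof -
  have "(k, 3 * k + s) \<in> (\<lambda>j. (j div 3, j)) ` {..<3 * x}"
    using assms by (intro image_eqI[where x = "3 * k + s"]) auto
  then show ?thesis by (simp add: star_config_def)
qed

lemma star_config_col_cell:
  assumes "l < y" "s < 3"
  shows "(x + 3 * l + s, 3 * x + l) \<in> star_config n m x y"
proof -
  have "(x + 3 * l + s, 3 * x + l) \<in> (\<lambda>i. (i, 3 * x + (i - x) div 3)) ` {x..<x + 3 * y}"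
    using assms by (intro image_eqI[where x = "x + 3 * l + s"]) auto
  then show ?thesis by (simp add: star_config_def)
qed

lemma star_config_row_card:
  assumes "k < x"
  shows "3 \<le> card (row (star_config n m x y) k)"
proof -
  have "{3 * k, 3 * k + 1, 3 * k + 2} \<subseteq> row (star_config n m x y) k"
    using star_config_row_cell[OF assms, where s = 0] star_config_row_cell[OF assms, where s = 1]
      star_config_row_cell[OF assms, where s = 2]
    by (auto simp: row_def)
  from card_mono[OF finite_row[OF finite_star_config] this] show ?thesis by simp
qed

lemma star_config_col_card:
  assumes "l < y"
  shows "3 \<le> card (col (star_config n m x y) (3 * x + l))"
proof -
  have "{x + 3 * l, x + 3 * l + 1, x + 3 * l + 2} \<subseteq> col (star_config n m x y) (3 * x + l)"
    using star_config_col_cell[OF assms, where s = 0] star_config_col_cell[OF assms, where s = 1]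
      star_config_col_cell[OF assms, where s = 2]
    by (auto simp: col_def)
  from card_mono[OF finite_col[OF finite_star_config] this] show ?thesis by simp
qed

lemma star_config_meets_all_lines: "meets_all_lines n m (star_config n m x y)"
  unfolding meets_all_lines_def
proof (intro conjI allI impI)
  fix i assume "i < n"
  then consider "i < x" | "x \<le> i" "i < x + 3 * y" | "x + 3 * y \<le> i" "i < n" by linarith
  then have "\<exists>j. (i, j) \<in> star_config n m x y"
  proof cases
    case 1
    then show ?thesis using star_config_row_cell[where s = 0] by fastforce
  next
    case 2
    then show ?thesis by (intro exI[of _ "3 * x + (i - x) div 3"]) (auto simp: star_config_def)
  next
    case 3
    then show ?thesis by (intro exI[of _ "3 * x"]) (auto simp: star_config_def)
  qed
  then show "row (star_config n m x y) i \<noteq> {}" by (simp add: row_def)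
next
  fix j assume "j < m"
  then consider "j < 3 * x" | "3 * x \<le> j" "j < 3 * x + y" | "3 * x + y \<le> j" "j < m" by linarith
  then have "\<exists>i. (i, j) \<in> star_config n m x y"
  proof cases
    case 1
    then show ?thesis by (intro exI[of _ "j div 3"]) (auto simp: star_config_def)
  next
    case 2
    then have "(x + 3 * (j - 3 * x) + 0, 3 * x + (j - 3 * x)) \<in> star_config n m x y"
      by (intro star_config_col_cell) auto
    with 2 show ?thesis by auto
  next
    case 3
    then show ?thesis by (intro exI[of _ 0]) (auto simp: star_config_def)
  qed
  then show "col (star_config n m x y) j \<noteq> {}" by (simp add: col_def)
qed

context
  fixes n m x y :: nat
  assumes dims: "1 \<le> x" "1 \<le> y" "x + 3 * y \<le> n" "3 * x + y \<le> m"
begin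

lemma star_config_subset: "star_config n m x y \<subseteq> rook_verts n m"
proof -
  have "j div 3 < x" if "j < 3 * x" for j using that by linarith
  moreover have "(i - x) div 3 < y" if "i < x + 3 * y" for i
    using that dims by (intro less_mult_imp_div_less) linarith
  ultimately show ?thesis
    using dims by (fastforce simp: star_config_def rook_verts_eq)
qed

lemma star_config_rich_lines:
  assumes "(i, j) \<in> star_config n m x y"
  shows "3 \<le> card (row (star_config n m x y) i) \<or> 3 \<le> card (col (star_config n m x y) j)"
proof -
  consider "i < x" | "\<exists>l<y. j = 3 * x + l"
    using assms dims unfolding star_config_def by (auto intro: less_mult_imp_div_less)
  then show ?thesis
    by cases (auto intro: star_config_row_card star_config_col_card)
qed

lemma star_config_total_2_dominating:
  "total_k_dominating (rook_verts n m) rook_adj 2 (star_config n m x y)"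
  using star_config_subset star_config_meets_all_lines star_config_rich_lines
  by (rule rook_total_2_dominatingI)

lemma card_star_config: "card (star_config n m x y) \<le> n + m - x - y"
proof -
  have "card (star_config n m x y) \<le> 3 * x + 3 * y + (n - (x + 3 * y)) + (m - (3 * x + y))"
    unfolding star_config_def
    by (intro card_Un_le[THEN order_trans] add_mono card_image_le[THEN order_trans]) auto
  with dims show ?thesis by linarith
qed

lemma gamma_2t_rook_le_star: "gamma_2t (rook_verts n m) rook_adj \<le> n + m - x - y"
  using gamma_2t_le[OF star_config_total_2_dominating] card_star_config by (rule order_trans)

end

lemma star_parameters_exist:
  fixes n m T :: nat
  assumes "2 \<le> T" "T + 2 \<le> n" "T + 2 \<le> m" "4 * T \<le> n + m"
    and tight: "4 * T = n + m \<Longrightarrow> even (n - T)"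
  shows "\<exists>x y. 1 \<le> x \<and> 1 \<le> y \<and> x + 3 * y \<le> n \<and> 3 * x + y \<le> m \<and> x + y = T"
proof -
  define q where "q = (n - T) div 2"
  have q: "2 * q \<le> n - T" "n - T \<le> 2 * q + 1" unfolding q_def by linarith+
  have "3 * T \<le> m + 2 * q"
  proof (cases "4 * T = n + m")
    case True
    then have "2 * q = n - T" using tight unfolding q_def by auto
    then show ?thesis using True assms by linarith
  next
    case False
    then show ?thesis using q assms by linarith
  qed
  then show ?thesis
    using assms q by (cases "T - 1 \<le> q")
      (intro exI[of _ 1] exI[of _ "T - 1"], linarith, intro exI[of _ "T - q"] exI[of _ q], linarith)
qed

lemma rook_sides_sum_ge_8:
  fixes n m k :: nat
  assumes "2 \<le> n" "2 \<le> m" "3 * (n + m) \<le> 4 * k"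
    and tight: "4 * k = 3 * (n + m) \<Longrightarrow> (3 * n) mod 8 = m mod 8"
    and "k < 2 * n" "k < 2 * m" "\<not> (n = 3 \<and> m = 3)"
  shows "8 \<le> n + m"
proof (rule ccontr)
  have bound: "3 * n + 3 * m \<le> 4 * k" using assms(3) by simp
  assume "\<not> 8 \<le> n + m"
  with bound have "n < 4" "m < 4" using assms by linarith+
  then consider "n = 2" "m = 2" | "n = 2" "m = 3" | "n = 3" "m = 2" | "n = 3" "m = 3"
    using assms(1,2) by (auto simp: numeral_eq_Suc less_Suc_eq)
  then show False
  proof cases
    case 1
    then have "k = 3" using assms(3,5) by simp
    with 1 tight show False by simp
  qed (use bound assms in linarith)+
qed

lemma even_of_four_mult_add_mod_8:
  fixes d m l :: nat
  shows "4 * d + m = l \<Longrightarrow> l mod 8 = m mod 8 \<Longrightarrow> even d"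
  by presburger

lemma star_size_admissible:
  fixes n m k :: nat
  assumes "2 \<le> n" "2 \<le> m" "3 * (n + m) \<le> 4 * k"
    and tight: "4 * k = 3 * (n + m) \<Longrightarrow> (3 * n) mod 8 = m mod 8"
    and "k < 2 * n" "k < 2 * m" "\<not> (n = 3 \<and> m = 3)"
  defines "T \<equiv> max 2 (n + m - k)"
  shows "T + 2 \<le> n" "T + 2 \<le> m" "4 * T \<le> n + m" "4 * T = n + m \<Longrightarrow> even (n - T)"
proof -
  have bound: "3 * n + 3 * m \<le> 4 * k" using assms(3) by simp
  have "8 \<le> n + m" by (rule rook_sides_sum_ge_8[OF assms(1-7)])
  with bound show "T + 2 \<le> n" "T + 2 \<le> m" "4 * T \<le> n + m"
    using assms(1,2,5,6) unfolding T_def by linarith+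
  assume eq: "4 * T = n + m"
  show "even (n - T)"
  proof (cases "n + m - k \<le> 2")
    case True
    then have "T = 2" "n = 4" using eq assms(5,6) unfolding T_def by linarith+
    then show ?thesis by simp
  next
    case False
    then have "T + k = n + m" unfolding T_def by simp
    define d where "d = n - T"
    have "n = T + d" using \<open>T + 2 \<le> n\<close> unfolding d_def by simp
    with eq \<open>T + k = n + m\<close> have "4 * k = 3 * n + 3 * m" "4 * d + m = 3 * n" by linarith+
    with tight have "(3 * n) mod 8 = m mod 8" by simp
    with \<open>4 * d + m = 3 * n\<close> show ?thesis
      unfolding d_def[symmetric] by (rule even_of_four_mult_add_mod_8)
  qed
qed

lemma gamma_2t_rook_le:
  fixes n m k :: nat
  assumes "2 \<le> n" "2 \<le> m" "3 * (n + m) \<le> 4 * k"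
    and "4 * k = 3 * (n + m) \<Longrightarrow> (3 * n) mod 8 = m mod 8"
  shows "gamma_2t (rook_verts n m) rook_adj \<le> k"
proof -
  consider "2 * n \<le> k \<or> 2 * m \<le> k" | "n = 3" "m = 3"
    | "k < 2 * n" "k < 2 * m" "\<not> (n = 3 \<and> m = 3)"
    by force
  then show ?thesis
  proof cases
    case 1
    then show ?thesis
      using gamma_2t_rook_le_two_rows[OF assms(1,2)] gamma_2t_rook_le_two_cols[OF assms(1,2)]
      by linarith
  next
    case 2
    then have "5 \<le> k" using assms(3) by simp
    with 2 show ?thesis using gamma_2t_rook_le_cross[of 3 3] by simp
  next
    case 3
    define T where "T = max 2 (n + m - k)"
    note admissible = star_size_admissible[OF assms 3, folded T_def]
    obtain x y where "1 \<le> x" "1 \<le> y" "x + 3 * y \<le> n" "3 * x + y \<le> m" "x + y = T"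
      using star_parameters_exist[OF _ admissible] by (auto simp: T_def)
    then have "gamma_2t (rook_verts n m) rook_adj \<le> n + m - x - y" by (intro gamma_2t_rook_le_star)
    with \<open>x + y = T\<close> show ?thesis unfolding T_def by linarith
  qed
qed

section \<open>Adding four rows and four columns\<close>

lemma gamma_2t_rook_shift_ge:
  assumes "2 \<le> n" "2 \<le> m"
  shows "gamma_2t (rook_verts n m) rook_adj + 6 \<le> gamma_2t (rook_verts (n + 4) (m + 4)) rook_adj"
proof -
  obtain S where tkd: "total_k_dominating (rook_verts (n + 4) (m + 4)) rook_adj 2 S"
    and card: "card S = gamma_2t (rook_verts (n + 4) (m + 4)) rook_adj"
    using gamma_2t_attained[OF rook_two_rows_total_2_dominating[of "n + 4" "m + 4"]] by auto
  have "gamma_2t (rook_verts n m) rook_adj + 6 \<le> card S"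
  proof (cases "meets_all_lines (n + 4) (m + 4) S")
    case True
    have lower: "3 * n + 3 * m + 24 \<le> 4 * card S"
      using rook_total_2_dominating_card_lower_bound[OF tkd True] by simp
    have "gamma_2t (rook_verts n m) rook_adj \<le> card S - 6"
    proof (rule gamma_2t_rook_le[OF assms])
      show "3 * (n + m) \<le> 4 * (card S - 6)" using lower by simp
      assume "4 * (card S - 6) = 3 * (n + m)"
      with lower have "4 * card S = 3 * (n + 4 + (m + 4))" by simp
      then have "(3 * (n + 4)) mod 8 = (m + 4) mod 8"
        by (rule rook_total_2_dominating_tight_mod_8[OF tkd True])
      then have "(3 * (n + 4) + 4) mod 8 = (m + 4 + 4) mod 8" by (metis mod_add_left_eq)
      then have "(3 * n + 8 * 2) mod 8 = (m + 8 * 1) mod 8" by (simp add: algebra_simps)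
      then show "(3 * n) mod 8 = m mod 8" by (simp only: mod_mult_self2)
    qed
    with lower show ?thesis by linarith
  next
    case False
    then consider i where "i < n + 4" "row S i = {}" | j where "j < m + 4" "col S j = {}"
      unfolding meets_all_lines_def by blast
    then show ?thesis
      using rook_total_2_dominating_card_ge_of_empty_row[OF tkd]
        rook_total_2_dominating_card_ge_of_empty_col[OF tkd]
        gamma_2t_rook_le_two_rows[OF assms] gamma_2t_rook_le_two_cols[OF assms]
      by cases fastforce+
  qed
  with card show ?thesis by simp
qed

lemma meets_all_lines_card_pos:
  assumes "S \<subseteq> rook_verts n m" "meets_all_lines n m S"
  shows "i < n \<Longrightarrow> 0 < card (row S i)" and "j < m \<Longrightarrow> 0 < card (col S j)"
  using assms finite_row[OF finite_rook_subset] finite_col[OF finite_rook_subset]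
  by (auto simp: meets_all_lines_def card_gt_0_iff)

lemma card_image_add_diff: "card ((+) k ` A - {k + x}) = card (A - {x :: nat})"
proof -
  have "(+) k ` A - {k + x} = (+) k ` (A - {x})" by auto
  then show ?thesis by (simp add: card_image)
qed

lemma row_col_block_union:
  fixes T :: "(nat \<times> nat) set"
  assumes "S \<subseteq> rook_verts n m"
  defines "U \<equiv> S \<union> (\<lambda>(i, j). (n + i, m + j)) ` T"
  shows "i < n \<Longrightarrow> row U i = row S i" and "j < m \<Longrightarrow> col U j = col S j"
    and "row U (n + i) = (+) m ` row T i" and "col U (m + j) = (+) n ` col T j"
  using assms by (auto simp: U_def row_def col_def image_iff rook_verts_eq)

lemma rook_total_2_dominating_block_union:
  assumes S: "total_k_dominating (rook_verts n m) rook_adj 2 S" "meets_all_lines n m S"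
    and T: "total_k_dominating (rook_verts a b) rook_adj 2 T" "meets_all_lines a b T"
  shows "total_k_dominating (rook_verts (n + a) (m + b)) rook_adj 2
           (S \<union> (\<lambda>(i, j). (n + i, m + j)) ` T)" (is "total_k_dominating _ _ _ ?U")
proof -
  have S_verts: "S \<subseteq> rook_verts n m" and T_verts: "T \<subseteq> rook_verts a b"
    using S(1) T(1) by (simp_all add: rook_total_2_dominating_iff)
  then have subS: "S \<subseteq> {..<n} \<times> {..<m}" and subT: "T \<subseteq> {..<a} \<times> {..<b}"
    by (simp_all add: rook_verts_eq)
  note union_lines = row_col_block_union[OF S_verts]
  have rowS: "row S i \<subseteq> {..<m}" and colS: "col S j \<subseteq> {..<n}" for i j
    using subS by (auto simp: row_def col_def)
  have posS: "i < n \<Longrightarrow> 0 < card (row S i)" "j < m \<Longrightarrow> 0 < card (col S j)" for i j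
    using meets_all_lines_card_pos[OF S_verts S(2)] by auto
  have posT: "i < a \<Longrightarrow> 0 < card (row T i)" "j < b \<Longrightarrow> 0 < card (col T j)" for i j
    using meets_all_lines_card_pos[OF T_verts T(2)] by auto
  show ?thesis
    unfolding rook_total_2_dominating_iff
  proof (intro conjI allI impI)
    show "?U \<subseteq> rook_verts (n + a) (m + b)" using subS subT by (auto simp: rook_verts_eq)
    fix i j assume ij: "i < n + a" "j < m + b"
    show "2 \<le> card (row ?U i - {j}) + card (col ?U j - {i})"
    proof (cases "i < n"; cases "j < m")
      assume "i < n" "j < m"
      then show ?thesis using S(1) by (simp add: union_lines rook_total_2_dominating_iff)
    next
      assume "i < n" "\<not> j < m"
      then obtain j' where "j = m + j'" "j' < b"
        using ij by (metis add_less_cancel_left le_Suc_ex not_less)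
      moreover have "row S i - {j} = row S i" "(+) n ` col T j' - {i} = (+) n ` col T j'"
        using rowS \<open>i < n\<close> \<open>\<not> j < m\<close> by auto
      ultimately show ?thesis
        using posS(1)[OF \<open>i < n\<close>] posT(2)[OF \<open>j' < b\<close>] \<open>i < n\<close>
        by (simp add: union_lines card_image)
    next
      assume "\<not> i < n" "j < m"
      then obtain i' where "i = n + i'" "i' < a"
        using ij by (metis add_less_cancel_left le_Suc_ex not_less)
      moreover have "col S j - {i} = col S j" "(+) m ` row T i' - {j} = (+) m ` row T i'"
        using colS \<open>j < m\<close> \<open>\<not> i < n\<close> by auto
      ultimately show ?thesis
        using posS(2)[OF \<open>j < m\<close>] posT(1)[OF \<open>i' < a\<close>] \<open>j < m\<close>
        by (simp add: union_lines card_image)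
    next
      assume "\<not> i < n" "\<not> j < m"
      then obtain i' j' where "i = n + i'" "i' < a" "j = m + j'" "j' < b"
        using ij by (metis add_less_cancel_left le_Suc_ex not_less)
      then show ?thesis
        using T(1) by (simp add: union_lines card_image_add_diff rook_total_2_dominating_iff)
    qed
  qed
qed

lemma gamma_2t_rook_shift_le:
  assumes tkd: "total_k_dominating (rook_verts n m) rook_adj 2 S" and lines: "meets_all_lines n m S"
  shows "gamma_2t (rook_verts (n + 4) (m + 4)) rook_adj \<le> card S + 6"
proof -
  let ?T = "star_config 4 4 1 1" and ?shift = "\<lambda>(i, j). (n + i, m + j)"
  have "total_k_dominating (rook_verts 4 4) rook_adj 2 ?T"
    by (rule star_config_total_2_dominating) simp_all
  then have "total_k_dominating (rook_verts (n + 4) (m + 4)) rook_adj 2 (S \<union> ?shift ` ?T)"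
    by (rule rook_total_2_dominating_block_union[OF tkd lines _ star_config_meets_all_lines])
  then have "gamma_2t (rook_verts (n + 4) (m + 4)) rook_adj \<le> card (S \<union> ?shift ` ?T)"
    by (rule gamma_2t_le)
  also have "\<dots> \<le> card S + card (?shift ` ?T)" by (rule card_Un_le)
  also have "\<dots> \<le> card S + card ?T" by (simp add: card_image_le finite_star_config)
  also have "card ?T \<le> 6" using card_star_config[of 1 1 4 4] by simp
  finally show ?thesis by simp
qed

theorem theorem12:
  fixes n m :: nat
  assumes "n \<ge> 2" and "m \<ge> 2"
    and "\<exists>S. total_k_dominating (rook_verts n m) rook_adj 2 S
            \<and> card S = gamma_2t (rook_verts n m) rook_adj
            \<and> (\<forall>v\<in>complete_graph_verts n. S \<inter> ({v} \<times> complete_graph_verts m) \<noteq> {})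
            \<and> (\<forall>w\<in>complete_graph_verts m. S \<inter> (complete_graph_verts n \<times> {w}) \<noteq> {})"
  shows "gamma_2t (rook_verts (n + 4) (m + 4)) rook_adj = gamma_2t (rook_verts n m) rook_adj + 6"
proof -
  obtain S where tkd: "total_k_dominating (rook_verts n m) rook_adj 2 S"
    and card: "card S = gamma_2t (rook_verts n m) rook_adj"
    and rows: "\<forall>v\<in>complete_graph_verts n. S \<inter> ({v} \<times> complete_graph_verts m) \<noteq> {}"
    and cols: "\<forall>w\<in>complete_graph_verts m. S \<inter> (complete_graph_verts n \<times> {w}) \<noteq> {}"
    using assms(3) by blast
  have "meets_all_lines n m S"
    using rows cols by (auto simp: meets_all_lines_def row_def col_def complete_graph_verts_def)
  with tkd card
  have "gamma_2t (rook_verts (n + 4) (m + 4)) rook_adj \<le> gamma_2t (rook_verts n m) rook_adj + 6"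
    using gamma_2t_rook_shift_le by fastforce
  with gamma_2t_rook_shift_ge[OF assms(1,2)] show ?thesis by linarith
qed

end
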